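(* Let $1\le k<\frac n2$, $\theta\in\mathbb{R}$ and $\gamma\in\mathbb{R}^n$ with $\|\gamma\|_0\le k$. Then $\theta$ is the unique minimizer over $\mu\in\mathbb{R}$ of $$\mu\mapsto \sup_{\omega\in\mathbb{R}}\ \inf_{\zeta\in\mathbb{C},\,|\zeta|\le 1}\left|E_{\theta,\gamma}\Big(\frac1n\sum_{j=1}^n e^{i\omega(X_j-\mu)+\frac{\omega^2}{2}}\Big)-\frac{n-k}{n}-\frac kn\zeta\right| .$$
   Context: Model: for an integer $n\ge 2$, observations $X_j=\theta+\gamma_j+\sigma Z_j$, $j=1,\dots,n$, where $\theta\in\mathbb{R}$, $\gamma=(\gamma_1,\dots,\gamma_n)\in\mathbb{R}^n$, $\sigma>0$, and $Z_1,\dots,Z_n$ are i.i.d. $N(0,1)$. $P_{\theta,\gamma,\sigma}$ denotes the joint law of $(X_1,\dots,X_n)$ and $E_{\theta,\gamma,\sigma}$ its expectation; $P_{\theta,\gamma}$ and $E_{\theta,\gamma}$ denote the case $\sigma=1$. $\|\gamma\|_0=\#\{j:\gamma_j\neq 0\}$. *)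

theory Defs
  imports "HOL-Probability.Probability"
begin

text \<open>Coordinates are indexed by j in {..<n} (0-based) instead of 1..n.
  P_law n theta gamma sigma is the joint law of (X_j)_{j<n}, X_j = theta + gamma_j + sigma Z_j,
  Z_j iid N(0,1): the product of the normal laws N(theta + gamma_j, sigma^2).\<close>

definition P_law :: "nat \<Rightarrow> real \<Rightarrow> (nat \<Rightarrow> real) \<Rightarrow> real \<Rightarrow> (nat \<Rightarrow> real) measure" where
  "P_law n \<theta> \<gamma> \<sigma> = PiM {..<n} (\<lambda>j. density lborel (normal_density (\<theta> + \<gamma> j) \<sigma>))"

definition E_law :: "nat \<Rightarrow> real \<Rightarrow> (nat \<Rightarrow> real) \<Rightarrow> ((nat \<Rightarrow> real) \<Rightarrow> complex) \<Rightarrow> complex" where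
  "E_law n \<theta> \<gamma> f = integral\<^sup>L (P_law n \<theta> \<gamma> 1) f"

definition l0_norm :: "nat \<Rightarrow> (nat \<Rightarrow> real) \<Rightarrow> nat" where
  "l0_norm n \<gamma> = card {j \<in> {..<n}. \<gamma> j \<noteq> 0}"

definition crit :: "nat \<Rightarrow> nat \<Rightarrow> real \<Rightarrow> (nat \<Rightarrow> real) \<Rightarrow> real \<Rightarrow> real" where
  "crit n k \<theta> \<gamma> \<mu> =
     (SUP \<omega>::real. INF \<zeta> \<in> {z::complex. cmod z \<le> 1}.
        cmod (E_law n \<theta> \<gamma> (\<lambda>x. (1 / of_nat n) * (\<Sum>j<n.
                 exp (\<i> * complex_of_real (\<omega> * (x j - \<mu>)) + complex_of_real (\<omega>\<^sup>2 / 2))))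
              - complex_of_real (real (n - k) / real n)
              - complex_of_real (real k / real n) * \<zeta>))"

end

theory Submission
  imports Defs
begin

(* The factor exp(\<omega>^2/2) exactly cancels the Gaussian damping of the characteristic
   function, so the expectation is the empirical characteristic function
   (1/n) \<Sum>_j exp(i \<omega> (\<theta> - \<mu> + \<gamma>_j)) of the shifted contaminations, and the infimum over
   \<zeta> is its distance to the disc with centre (n-k)/n and radius k/n.  At \<mu> = \<theta> the at
   least n - k coordinates with \<gamma>_j = 0 contribute 1 each, which keeps the point in the
   disc for every \<omega>.  For \<mu> \<noteq> \<theta> the frequency \<omega> = \<pi>/(\<theta> - \<mu>) turns these contributions
   into -1, so the real part is at most (2k - n)/n and, as 2k < n, the point leaves the
   disc. *)

lemma char_normal_density:
  assumes "\<sigma> > 0"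
  shows "(CLINT x | density lborel (normal_density m \<sigma>). iexp (t * x))
       = iexp (t * m) * complex_of_real (exp (- (\<sigma> * t)\<^sup>2 / 2))"
proof -
  have "(CLINT x | density lborel (normal_density m \<sigma>). iexp (t * x))
      = (CLINT x | lborel. normal_density m \<sigma> x *\<^sub>R iexp (t * x))"
    by (subst integral_density) (auto simp: normal_density_nonneg)
  also have "\<dots> = \<sigma> *\<^sub>R
      (CLINT y | lborel. normal_density m \<sigma> (m + \<sigma> * y) *\<^sub>R iexp (t * (m + \<sigma> * y)))"
    using assms by (subst lborel_integral_real_affine[of \<sigma> _ m]) simp_all
  also have "\<dots> = iexp (t * m) *
      (CLINT y | lborel. std_normal_density y *\<^sub>R iexp ((\<sigma> * t) * y))"
    using assms
    by (subst integral_mult_right_zero[symmetric], subst integral_scaleR_right[symmetric],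
        intro Bochner_Integration.integral_cong)
       (auto simp: normal_density_def exp_add scaleR_conv_of_real algebra_simps power_divide
          real_sqrt_mult)
  also have "(CLINT y | lborel. std_normal_density y *\<^sub>R iexp ((\<sigma> * t) * y))
      = char std_normal_distribution (\<sigma> * t)"
    unfolding char_def by (subst integral_density) (auto simp: normal_density_nonneg)
  finally show ?thesis by (simp add: char_std_normal_distribution)
qed

lemma integral_PiM_component:
  fixes f :: "'a \<Rightarrow> 'b::{banach, second_countable_topology}"
  assumes "\<And>i. prob_space (M i)" "i \<in> I" "finite I" "f \<in> borel_measurable (M i)"
  shows "(\<integral>x. f (x i) \<partial>PiM I M) = (\<integral>y. f y \<partial>M i)"
proof -
  have "(\<integral>y. f y \<partial>M i) = (\<integral>y. f y \<partial>distr (PiM I M) (M i) (\<lambda>x. x i))"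
    using assms by (subst distr_PiM_component) auto
  also have "\<dots> = (\<integral>x. f (x i) \<partial>PiM I M)"
    using assms by (subst integral_distr) auto
  finally show ?thesis ..
qed

lemma integral_normal_density_compensated_phase:
  "(CLINT y | density lborel (normal_density m 1).
      exp (\<i> * complex_of_real (\<omega> * (y - \<mu>)) + complex_of_real (\<omega>\<^sup>2 / 2)))
   = exp (\<i> * complex_of_real (\<omega> * (m - \<mu>)))"
proof -
  have "(CLINT y | density lborel (normal_density m 1).
          exp (\<i> * complex_of_real (\<omega> * (y - \<mu>)) + complex_of_real (\<omega>\<^sup>2 / 2)))
      = (CLINT y | density lborel (normal_density m 1).
          exp (complex_of_real (\<omega>\<^sup>2 / 2) - \<i> * complex_of_real (\<omega> * \<mu>)) * iexp (\<omega> * y))"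
    by (intro Bochner_Integration.integral_cong) (auto simp: exp_add[symmetric] algebra_simps)
  also have "\<dots> = exp (complex_of_real (\<omega>\<^sup>2 / 2) - \<i> * complex_of_real (\<omega> * \<mu>))
                  * (iexp (\<omega> * m) * complex_of_real (exp (- (1 * \<omega>)\<^sup>2 / 2)))"
    by (subst integral_mult_right_zero, subst char_normal_density) simp_all
  also have "\<dots> = exp (\<i> * complex_of_real (\<omega> * (m - \<mu>)))"
    unfolding exp_of_real[symmetric] mult_exp_exp
    by (rule arg_cong[where f = exp]) (simp add: algebra_simps)
  finally show ?thesis .
qed

definition empirical_char :: "nat \<Rightarrow> (nat \<Rightarrow> real) \<Rightarrow> real \<Rightarrow> real \<Rightarrow> complex" where
  "empirical_char n \<gamma> d \<omega> =
     (1 / of_nat n) * (\<Sum>j<n. exp (\<i> * complex_of_real (\<omega> * (d + \<gamma> j))))"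

lemma E_law_compensated_phase_mean:
  "E_law n \<theta> \<gamma> (\<lambda>x. (1 / of_nat n) * (\<Sum>j<n.
       exp (\<i> * complex_of_real (\<omega> * (x j - \<mu>)) + complex_of_real (\<omega>\<^sup>2 / 2))))
   = empirical_char n \<gamma> (\<theta> - \<mu>) \<omega>"
proof -
  define M where "M = (\<lambda>j. density lborel (normal_density (\<theta> + \<gamma> j) 1))"
  define g where "g = (\<lambda>y. exp (\<i> * complex_of_real (\<omega> * (y - \<mu>)) + complex_of_real (\<omega>\<^sup>2 / 2)))"
  have prob: "prob_space (M j)" for j
    unfolding M_def by (rule prob_space_normal_density) simp
  interpret P: prob_space "PiM {..<n} M"
    by (rule prob_space_PiM) (simp add: prob)
  have integrable: "integrable (PiM {..<n} M) (\<lambda>x. g (x j))" if "j < n" for j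
    by (rule P.integrable_const_bound[where B = "exp (\<omega>\<^sup>2 / 2)"])
       (use that in \<open>auto simp: g_def norm_exp M_def\<close>)
  have "E_law n \<theta> \<gamma> (\<lambda>x. (1 / of_nat n) * (\<Sum>j<n. g (x j)))
      = (1 / of_nat n) * (\<Sum>j<n. \<integral>x. g (x j) \<partial>PiM {..<n} M)"
    unfolding E_law_def P_law_def M_def[symmetric]
    by (simp add: Bochner_Integration.integral_sum integrable)
  also have "\<dots> = (1 / of_nat n) * (\<Sum>j<n. \<integral>y. g y \<partial>M j)"
    by (intro arg_cong[where f = "(*) _"] sum.cong refl integral_PiM_component)
       (auto simp: prob[unfolded M_def] g_def M_def)
  also have "\<dots> = empirical_char n \<gamma> (\<theta> - \<mu>) \<omega>"
    unfolding empirical_char_def M_def g_def integral_normal_density_compensated_phase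
    by (simp add: algebra_simps)
  finally show ?thesis unfolding g_def .
qed

lemma INF_norm_diff_scaleR_cball:
  fixes w :: "'a::real_normed_vector"
  assumes "b \<ge> 0"
  shows "(INF z \<in> cball 0 1. norm (w - b *\<^sub>R z)) = max 0 (norm w - b)"
proof (rule antisym)
  define z where "z = (if norm w \<le> b then (1 / b) *\<^sub>R w else sgn w)"
  have "z \<in> cball 0 1"
    using assms by (auto simp: z_def norm_sgn divide_le_eq)
  moreover have "norm (w - b *\<^sub>R z) = max 0 (norm w - b)"
  proof (cases "norm w \<le> b")
    case True
    then show ?thesis
      using assms by (cases "b = 0") (auto simp: z_def)
  next
    case False
    then have "w - b *\<^sub>R z = (1 - b / norm w) *\<^sub>R w"
      by (simp add: z_def sgn_div_norm algebra_simps divide_inverse)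
    moreover have "0 \<le> 1 - b / norm w"
      using False by (simp add: divide_le_eq)
    ultimately have "norm (w - b *\<^sub>R z) = (1 - b / norm w) * norm w"
      by simp
    moreover have "w \<noteq> 0"
      using False assms by auto
    ultimately have "norm (w - b *\<^sub>R z) = norm w - b"
      by (simp add: left_diff_distrib)
    then show ?thesis
      using False by simp
  qed
  ultimately show "(INF z \<in> cball 0 1. norm (w - b *\<^sub>R z)) \<le> max 0 (norm w - b)"
    by (metis cINF_lower bdd_belowI2 norm_ge_zero)
next
  have "norm w - b \<le> norm (w - b *\<^sub>R z)" if "z \<in> cball 0 1" for z
  proof -
    have "norm (b *\<^sub>R z) \<le> b"
      using that assms by (simp add: mult_left_le)
    then show ?thesis
      using norm_triangle_ineq2[of w "b *\<^sub>R z"] by linarith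
  qed
  then show "max 0 (norm w - b) \<le> (INF z \<in> cball 0 1. norm (w - b *\<^sub>R z))"
    by (intro cINF_greatest) auto
qed

definition disc_distance :: "nat \<Rightarrow> nat \<Rightarrow> (nat \<Rightarrow> real) \<Rightarrow> real \<Rightarrow> real \<Rightarrow> real" where
  "disc_distance n k \<gamma> d \<omega> =
     max 0 (cmod (empirical_char n \<gamma> d \<omega> - complex_of_real (real (n - k) / real n))
            - real k / real n)"

lemma crit_eq_SUP_disc_distance:
  "crit n k \<theta> \<gamma> \<mu> = (SUP \<omega>. disc_distance n k \<gamma> (\<theta> - \<mu>) \<omega>)"
proof -
  have disc: "{z. cmod z \<le> 1} = cball 0 1"
    by auto
  have radius_nonneg: "0 \<le> real k / real n"
    by simp
  have disc_inf: "(INF \<zeta> \<in> {z. cmod z \<le> 1}. cmod (w - complex_of_real (real k / real n) * \<zeta>))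
      = max 0 (cmod w - real k / real n)" for w
    using INF_norm_diff_scaleR_cball[OF radius_nonneg, of w, unfolded scaleR_conv_of_real]
    unfolding disc .
  show ?thesis
    unfolding crit_def disc_distance_def E_law_compensated_phase_mean by (simp only: disc_inf)
qed

lemma sum_lessThan_split_support:
  fixes f :: "nat \<Rightarrow> 'a::comm_semiring_1"
  assumes "\<And>j. j < n \<Longrightarrow> \<gamma> j = 0 \<Longrightarrow> f j = c"
  shows "(\<Sum>j<n. f j) =
           of_nat (n - l0_norm n \<gamma>) * c + (\<Sum>j \<in> {j \<in> {..<n}. \<gamma> j \<noteq> 0}. f j)"
proof -
  define S where "S = {j \<in> {..<n}. \<gamma> j \<noteq> 0}"
  have "(\<Sum>j<n. f j) = (\<Sum>j \<in> {..<n} - S. f j) + (\<Sum>j \<in> S. f j)"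
    by (rule sum.subset_diff) (auto simp: S_def)
  also have "(\<Sum>j \<in> {..<n} - S. f j) = of_nat (card ({..<n} - S)) * c"
    using assms by (simp add: S_def)
  also have "card ({..<n} - S) = n - l0_norm n \<gamma>"
    by (subst card_Diff_subset) (auto simp: S_def l0_norm_def)
  finally show ?thesis
    by (simp add: S_def)
qed

lemma l0_norm_le: "l0_norm n \<gamma> \<le> n"
  unfolding l0_norm_def using card_mono[of "{..<n}" "{j \<in> {..<n}. \<gamma> j \<noteq> 0}"] by auto

lemma norm_empirical_char_le_1: "cmod (empirical_char n \<gamma> d \<omega>) \<le> 1"
proof -
  have "cmod (\<Sum>j<n. exp (\<i> * complex_of_real (\<omega> * (d + \<gamma> j)))) \<le> real n"
    using norm_sum[of "\<lambda>j. exp (\<i> * complex_of_real (\<omega> * (d + \<gamma> j)))" "{..<n}"]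
    by (simp add: norm_exp)
  then show ?thesis
    by (cases "n = 0") (auto simp: empirical_char_def norm_divide)
qed

lemma empirical_char_unshifted_close:
  assumes "l0_norm n \<gamma> \<le> k" "k \<le> n"
  shows "cmod (empirical_char n \<gamma> 0 \<omega> - complex_of_real (real (n - k) / real n))
           \<le> real k / real n"
proof -
  define S where "S = {j \<in> {..<n}. \<gamma> j \<noteq> 0}"
  define e where "e = (\<lambda>j. exp (\<i> * complex_of_real (\<omega> * \<gamma> j)))"
  have "(\<Sum>j<n. e j) = of_nat (n - l0_norm n \<gamma>) + (\<Sum>j \<in> S. e j)"
    using sum_lessThan_split_support[of n \<gamma> e 1] by (simp add: e_def S_def)
  then have "(\<Sum>j<n. e j) - of_nat (n - k) = of_nat (k - l0_norm n \<gamma>) + (\<Sum>j \<in> S. e j)"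
    using assms by (simp add: of_nat_diff)
  also have "cmod \<dots> \<le> real (k - l0_norm n \<gamma>) + real (card S)"
    using norm_sum[of e S] by (intro norm_triangle_le add_mono) (simp_all add: e_def norm_exp)
  also have "\<dots> = real k"
    using assms by (simp add: S_def l0_norm_def)
  finally have "cmod ((\<Sum>j<n. e j) - of_nat (n - k)) \<le> real k" .
  moreover have "empirical_char n \<gamma> 0 \<omega> - complex_of_real (real (n - k) / real n)
      = ((\<Sum>j<n. e j) - of_nat (n - k)) / of_nat n"
    by (simp add: empirical_char_def e_def diff_divide_distrib)
  ultimately show ?thesis
    by (simp add: norm_divide divide_right_mono)
qed

lemma Re_empirical_char_antiphase:
  assumes "d \<noteq> 0" "l0_norm n \<gamma> \<le> k"
  shows "real n * Re (empirical_char n \<gamma> d (pi / d)) \<le> 2 * real k - real n"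
proof -
  define S where "S = {j \<in> {..<n}. \<gamma> j \<noteq> 0}"
  define f where "f = (\<lambda>j. cos (pi / d * (d + \<gamma> j)))"
  have "real n * Re (empirical_char n \<gamma> d (pi / d)) = (\<Sum>j<n. f j)"
    by (cases "n = 0") (simp_all add: empirical_char_def f_def Re_sum Re_exp)
  also have "\<dots> = - real (n - l0_norm n \<gamma>) + (\<Sum>j \<in> S. f j)"
    using sum_lessThan_split_support[of n \<gamma> f "-1"] assms(1) by (simp add: f_def S_def)
  also have "\<dots> \<le> - real (n - l0_norm n \<gamma>) + real (l0_norm n \<gamma>)"
    using sum_mono[of S f "\<lambda>_. 1"] by (simp add: f_def S_def l0_norm_def)
  finally show ?thesis
    using assms(2) l0_norm_le[of n \<gamma>] by linarith
qed

lemma disc_distance_bounds: "0 \<le> disc_distance n k \<gamma> d \<omega>" "disc_distance n k \<gamma> d \<omega> \<le> 2"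
proof -
  define c where "c = real (n - k) / real n"
  have "\<bar>c\<bar> \<le> 1"
    by (cases "n = 0") (simp_all add: c_def)
  then have "cmod (complex_of_real c) \<le> 1"
    by (simp only: norm_of_real)
  then have "cmod (empirical_char n \<gamma> d \<omega> - complex_of_real c) \<le> 2"
    using norm_triangle_ineq4[of "empirical_char n \<gamma> d \<omega>" "complex_of_real c"]
      norm_empirical_char_le_1[of n \<gamma> d \<omega>] by linarith
  moreover have "0 \<le> real k / real n"
    by simp
  ultimately show "disc_distance n k \<gamma> d \<omega> \<le> 2"
    unfolding disc_distance_def c_def[symmetric] by (intro max.boundedI) linarith+
  show "0 \<le> disc_distance n k \<gamma> d \<omega>"
    unfolding disc_distance_def by simp
qed

lemma crit_nonneg: "0 \<le> crit n k \<theta> \<gamma> \<mu>"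
  unfolding crit_eq_SUP_disc_distance
  by (rule cSUP_upper2[of _ _ 0]) (auto intro: bdd_aboveI[of _ 2] simp: disc_distance_bounds)

lemma crit_at_center:
  assumes "l0_norm n \<gamma> \<le> k" "k \<le> n"
  shows "crit n k \<theta> \<gamma> \<theta> = 0"
  using empirical_char_unshifted_close[OF assms]
  by (simp add: crit_eq_SUP_disc_distance disc_distance_def)

lemma crit_pos_off_center:
  assumes "l0_norm n \<gamma> \<le> k" "2 * real k < real n" "\<mu> \<noteq> \<theta>"
  shows "0 < crit n k \<theta> \<gamma> \<mu>"
proof -
  define d where "d = \<theta> - \<mu>"
  define A where "A = empirical_char n \<gamma> d (pi / d)"
  have "d \<noteq> 0" "real n > 0"
    using assms by (auto simp: d_def)
  have "real (n - k) / real n - Re A \<le> cmod (A - complex_of_real (real (n - k) / real n))"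
    using abs_Re_le_cmod[of "A - complex_of_real (real (n - k) / real n)"] by simp
  moreover have "real n * Re A \<le> 2 * real k - real n"
    unfolding A_def by (rule Re_empirical_char_antiphase[OF \<open>d \<noteq> 0\<close> assms(1)])
  ultimately have "real k / real n < cmod (A - complex_of_real (real (n - k) / real n))"
    using assms(2) \<open>real n > 0\<close> by (simp add: of_nat_diff field_simps)
  then have "0 < disc_distance n k \<gamma> d (pi / d)"
    by (simp add: disc_distance_def A_def)
  also have "\<dots> \<le> (SUP \<omega>. disc_distance n k \<gamma> d \<omega>)"
    by (rule cSUP_upper) (auto intro: bdd_aboveI[of _ 2] simp: disc_distance_bounds)
  finally show ?thesis
    by (simp add: crit_eq_SUP_disc_distance d_def)
qed

theorem mainTheorem1:
  fixes n k :: nat and \<theta> :: real and \<gamma> :: "nat \<Rightarrow> real"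
  assumes "n \<ge> 2" and "1 \<le> k" and "real k < real n / 2"
    and "l0_norm n \<gamma> \<le> k"
  shows "(\<forall>\<mu>. crit n k \<theta> \<gamma> \<theta> \<le> crit n k \<theta> \<gamma> \<mu>)
       \<and> (\<forall>\<mu>. crit n k \<theta> \<gamma> \<mu> \<le> crit n k \<theta> \<gamma> \<theta> \<longrightarrow> \<mu> = \<theta>)"
proof -
  have "2 * real k < real n" "k \<le> n"
    using assms(3) by simp_all
  then have "crit n k \<theta> \<gamma> \<theta> = 0" "\<And>\<mu>. \<mu> \<noteq> \<theta> \<Longrightarrow> 0 < crit n k \<theta> \<gamma> \<mu>"
    using crit_at_center crit_pos_off_center assms(4) by blast+
  then show ?thesis
    using crit_nonneg by (metis not_less)
qed

end
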